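(* The space $L(\omega_1)$ is a $P$-space that is not a Frolik space. In particular, there is a $P$-space that is not Frolik.
   Context: $L(\omega_1)$ is the set $\omega_1+1=\{\alpha:\alpha\le\omega_1\}$ with the topology in which every $\alpha<\omega_1$ is isolated and the sets $]\alpha,\omega_1]=\{\gamma:\alpha<\gamma\le\omega_1\}$, $\alpha<\omega_1$, form a local base at $\omega_1$. A $P$-space is a space in which every countable intersection of open sets is open. A space $X$ is Frolik if there is a sequence $\langle S_n:n<\omega\rangle$ of $\sigma$-compact spaces and a closed subset $F\subseteq\prod_{n<\omega}S_n$ such that $X$ is homeomorphic to $F$; $\sigma$-compact means a countable union of compact subspaces. *)

theory Defs
  imports "HOL-Analysis.Analysis"
begin

text \<open>The ordinal omega_1, realised as Main's successor cardinal of the natural numbers: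
  a well-order (cardinal order, hence an initial ordinal) of cardinality aleph_1.
  Its field plays the role of the set of countable ordinals {alpha. alpha < omega_1}.\<close>
abbreviation omega1 :: "nat set rel" where
  "omega1 \<equiv> cardSuc natLeq"

text \<open>L(omega_1) on the carrier omega_1 + 1: countable ordinals alpha are Some alpha,
  the top point omega_1 is None.\<close>
definition L_omega1 :: "nat set option topology" where
  "L_omega1 = topology (\<lambda>U. U \<subseteq> insert None (Some ` Field omega1) \<and>
     (None \<in> U \<longrightarrow>
        (\<exists>\<alpha>\<in>Field omega1.
           insert None (Some ` {\<gamma>\<in>Field omega1. (\<alpha>, \<gamma>) \<in> omega1 \<and> \<gamma> \<noteq> \<alpha>}) \<subseteq> U)))"

definition p_space :: "'a topology \<Rightarrow> bool" where
  "p_space X \<longleftrightarrow> (\<forall>U :: nat \<Rightarrow> 'a set. (\<forall>n. openin X (U n)) \<longrightarrow> openin X (\<Inter>n. U n))"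

definition sigma_compact_space :: "'a topology \<Rightarrow> bool" where
  "sigma_compact_space X \<longleftrightarrow>
     (\<exists>K :: nat \<Rightarrow> 'a set. (\<forall>n. compactin X (K n)) \<and> topspace X = (\<Union>n. K n))"

text \<open>Frolik space, with the factor spaces S_n carried by the type 'b.\<close>
definition frolik_space_over :: "'b itself \<Rightarrow> 'a topology \<Rightarrow> bool" where
  "frolik_space_over _ X \<longleftrightarrow>
     (\<exists>S :: nat \<Rightarrow> 'b topology. (\<forall>n. sigma_compact_space (S n)) \<and>
        (\<exists>F. closedin (product_topology S UNIV) F \<and>
             X homeomorphic_space subtopology (product_topology S UNIV) F))"

end

theory Submission imports Defs "HOL-Library.Countable_Set_Type" begin

text \<open>Every countable set of countable ordinals is bounded below omega_1.  Hence a countable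
  intersection of neighbourhoods of omega_1 still contains a tail, so L(omega_1) is a P-space;
  and every compact subset of L(omega_1) is finite, since a countably infinite set of isolated
  points is separated from omega_1 by a tail, leaving an open cover without finite subcover.
  On the other hand, in a countable product of sigma-compact spaces every uncountable set meets
  a compact box in an infinite set: pigeonholing coordinate by coordinate into the countably many
  compact pieces yields an injective sequence whose n-th term lies, in each coordinate i < n, in
  one fixed compact piece.  So a Frolik space all of whose compact sets are finite is countable,
  whereas L(omega_1) is uncountable.\<close>

subsection \<open>Pigeonholing an uncountable set along countably many coordinates\<close>

primrec uncountable_refinement :: "('a \<Rightarrow> nat \<Rightarrow> nat) \<Rightarrow> 'a set \<Rightarrow> nat \<Rightarrow> 'a set" where
  "uncountable_refinement g A 0 = A"
| "uncountable_refinement g A (Suc n) =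
     {a \<in> uncountable_refinement g A n.
        g a n = (SOME k. uncountable {a \<in> uncountable_refinement g A n. g a n = k})}"

lemma uncountable_fibre:
  fixes g :: "'a \<Rightarrow> nat"
  assumes "uncountable A"
  shows "\<exists>k. uncountable {a \<in> A. g a = k}"
proof (rule ccontr)
  assume "\<not> ?thesis"
  then have "countable (\<Union>k. {a \<in> A. g a = k})" by auto
  moreover have "(\<Union>k. {a \<in> A. g a = k}) = A" by auto
  ultimately show False using assms by simp
qed

lemma uncountable_refinement_uncountable:
  assumes "uncountable A"
  shows "uncountable (uncountable_refinement g A n)"
proof (induction n)
  case (Suc n)
  show ?case
    using someI_ex[OF uncountable_fibre[OF Suc.IH, of "\<lambda>a. g a n"]] by simp
qed (use assms in simp)

lemma uncountable_refinement_antimono: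
  "m \<le> n \<Longrightarrow> uncountable_refinement g A n \<subseteq> uncountable_refinement g A m"
  by (induction n) (auto simp: le_Suc_eq)

lemma inj_seq_in_infinite_sets:
  fixes T :: "nat \<Rightarrow> 'a set"
  assumes "\<And>m. infinite (T m)"
  obtains \<alpha> where "inj \<alpha>" "\<And>m. \<alpha> m \<in> T m"
proof -
  have "\<exists>a. a \<in> T m \<and> a \<notin> set xs" for m and xs :: "'a list"
    using infinite_imp_nonempty[of "T m - set xs"] assms[of m] by auto
  then obtain new where new: "\<And>m xs. new m xs \<in> T m \<and> new m xs \<notin> set xs" by metis
  define prefix where "prefix = rec_nat [] (\<lambda>m xs. xs @ [new m xs])"
  define \<alpha> where "\<alpha> m = new m (prefix m)" for m
  have set_prefix: "set (prefix m) = \<alpha> ` {..<m}" for m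
    by (induction m) (auto simp: prefix_def \<alpha>_def lessThan_Suc)
  have "inj \<alpha>"
  proof (rule injI)
    fix x y assume "\<alpha> x = \<alpha> y"
    then show "x = y"
      using new[of x "prefix x"] new[of y "prefix y"] set_prefix[of x] set_prefix[of y]
      by (metis \<alpha>_def image_eqI lessThan_iff linorder_neqE_nat)
  qed
  then show thesis using that[of \<alpha>] new by (simp add: \<alpha>_def)
qed

lemma uncountable_diagonal_sequence:
  fixes g :: "'a \<Rightarrow> nat \<Rightarrow> nat"
  assumes "uncountable A"
  obtains c :: "nat \<Rightarrow> nat" and \<alpha> :: "nat \<Rightarrow> 'a"
  where "inj \<alpha>" "range \<alpha> \<subseteq> A" "\<And>m i. i < m \<Longrightarrow> g (\<alpha> m) i = c i"
proof -
  let ?T = "uncountable_refinement g A"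
  define c where "c i = (SOME k. uncountable {a \<in> ?T i. g a i = k})" for i
  have "infinite (?T m)" for m
    using uncountable_refinement_uncountable[OF assms] countable_finite by blast
  then obtain \<alpha> where "inj \<alpha>" and \<alpha>: "\<And>m. \<alpha> m \<in> ?T m"
    using inj_seq_in_infinite_sets[of ?T] by blast
  moreover have "range \<alpha> \<subseteq> A"
    using \<alpha> uncountable_refinement_antimono[of 0] by fastforce
  moreover have "g (\<alpha> m) i = c i" if "i < m" for m i
    using \<alpha>[of m] uncountable_refinement_antimono[of "Suc i" m] that
    by (fastforce simp: c_def)
  ultimately show thesis using that by blast
qed

subsection \<open>Closed subspaces of countable products of sigma-compact spaces\<close>

lemma sigma_compact_product_uncountable_compactin:
  fixes S :: "nat \<Rightarrow> 'a topology"
  assumes sc: "\<And>n. sigma_compact_space (S n)"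
    and A: "uncountable A" "A \<subseteq> topspace (product_topology S UNIV)"
  obtains Q where "compactin (product_topology S UNIV) Q" "infinite (A \<inter> Q)"
proof -
  have "\<exists>Kn :: nat \<Rightarrow> 'a set. (\<forall>k. compactin (S n) (Kn k)) \<and> topspace (S n) = (\<Union>k. Kn k)" for n
    using sc[of n] unfolding sigma_compact_space_def .
  then obtain K :: "nat \<Rightarrow> nat \<Rightarrow> 'a set"
    where K: "\<And>n k. compactin (S n) (K n k)" "\<And>n. topspace (S n) = (\<Union>k. K n k)"
    by metis
  have coord: "x n \<in> topspace (S n)" if "x \<in> A" for x n
    using that A(2) by (auto simp: PiE_iff)
  then have "\<exists>k. x n \<in> K n k" if "x \<in> A" for x n
    using that K(2) by blast
  then obtain g where g: "\<And>x n. x \<in> A \<Longrightarrow> x n \<in> K n (g x n)" by metis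
  obtain c \<alpha> where \<alpha>: "inj \<alpha>" "range \<alpha> \<subseteq> A" "\<And>m i. i < m \<Longrightarrow> g (\<alpha> m) i = c i"
    by (rule uncountable_diagonal_sequence[OF A(1), of g]) metis
  define L where "L i = K i (c i) \<union> (\<lambda>m. \<alpha> m i) ` {..i}" for i
  have "compactin (S i) (L i)" for i
    unfolding L_def using coord \<alpha>(2)
    by (intro compactin_Un K(1) finite_imp_compactin) blast+
  then have "compactin (product_topology S UNIV) (PiE UNIV L)"
    by (simp add: compactin_PiE)
  moreover have "\<alpha> m i \<in> L i" for m i
    using g[of "\<alpha> m" i] \<alpha>(2) \<alpha>(3)[of i m] by (cases "i < m") (auto simp: L_def)
  then have "range \<alpha> \<subseteq> A \<inter> PiE UNIV L"
    using \<alpha>(2) by auto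
  then have "infinite (A \<inter> PiE UNIV L)"
    using \<alpha>(1) finite_subset range_inj_infinite by blast
  ultimately show thesis using that by blast
qed

lemma countable_closedin_sigma_compact_product:
  fixes S :: "nat \<Rightarrow> 'a topology"
  assumes "\<And>n. sigma_compact_space (S n)" "closedin (product_topology S UNIV) F"
    and "\<And>C. compactin (subtopology (product_topology S UNIV) F) C \<Longrightarrow> finite C"
  shows "countable F"
proof (rule ccontr)
  assume "uncountable F"
  moreover have "F \<subseteq> topspace (product_topology S UNIV)"
    using assms(2) by (rule closedin_subset)
  ultimately obtain Q where Q: "compactin (product_topology S UNIV) Q" "infinite (F \<inter> Q)"
    by (rule sigma_compact_product_uncountable_compactin[OF assms(1)])
  have "compactin (subtopology (product_topology S UNIV) F) (F \<inter> Q)"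
    using closed_Int_compactin[OF assms(2) Q(1)] by (simp add: compactin_subtopology)
  with assms(3) Q(2) show False by blast
qed

lemma homeomorphic_space_compactin_finite:
  assumes "X homeomorphic_space Y" "\<And>C. compactin X C \<Longrightarrow> finite C" "compactin Y C"
  shows "finite C"
proof -
  obtain f where f: "homeomorphic_map Y X f"
    using assms(1) homeomorphic_space homeomorphic_space_sym by blast
  then have "compactin X (f ` C)"
    using assms(3) homeomorphic_imp_continuous_map image_compactin by blast
  moreover have "inj_on f C"
    using homeomorphic_imp_injective_map[OF f] compactin_subset_topspace[OF assms(3)]
    by (rule inj_on_subset)
  ultimately show ?thesis
    using assms(2) finite_image_iff by blast
qed

lemma frolik_space_countable_if_compactin_finite:
  assumes "frolik_space_over TYPE('b) X" "\<And>C. compactin X C \<Longrightarrow> finite C"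
  shows "countable (topspace X)"
proof -
  obtain S :: "nat \<Rightarrow> 'b topology" and F
    where S: "\<And>n. sigma_compact_space (S n)" and F: "closedin (product_topology S UNIV) F"
      and hom: "X homeomorphic_space subtopology (product_topology S UNIV) F"
    using assms(1) unfolding frolik_space_over_def by blast
  have "countable F"
    using countable_closedin_sigma_compact_product[OF S F]
      homeomorphic_space_compactin_finite[OF hom assms(2)] by blast
  moreover obtain f where "homeomorphic_map (subtopology (product_topology S UNIV) F) X f"
    using hom homeomorphic_space homeomorphic_space_sym by blast
  then have "topspace X = f ` (topspace (product_topology S UNIV) \<inter> F)"
    by (metis homeomorphic_imp_surjective_map topspace_subtopology)
  then have "topspace X = f ` F"
    using closedin_subset[OF F] by (simp add: Int_absorb1)
  ultimately show ?thesis by simp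
qed

subsection \<open>The space L(omega_1)\<close>

lemma Well_order_omega1: "Well_order omega1"
  using cardSuc_Card_order[OF natLeq_Card_order] by (simp add: card_order_on_def)

lemma omega1_refl: "a \<in> Field omega1 \<Longrightarrow> (a, a) \<in> omega1"
  using Well_order_omega1
  by (auto simp: well_order_on_def linear_order_on_def partial_order_on_def preorder_on_def refl_on_def)

lemma omega1_trans: "(a, b) \<in> omega1 \<Longrightarrow> (b, c) \<in> omega1 \<Longrightarrow> (a, c) \<in> omega1"
  using Well_order_omega1
  unfolding well_order_on_def linear_order_on_def partial_order_on_def preorder_on_def trans_def
  by blast

lemma omega1_antisym: "(a, b) \<in> omega1 \<Longrightarrow> (b, a) \<in> omega1 \<Longrightarrow> a = b"
  using Well_order_omega1
  unfolding well_order_on_def linear_order_on_def partial_order_on_def antisym_def by blast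

lemma omega1_total:
  "a \<in> Field omega1 \<Longrightarrow> b \<in> Field omega1 \<Longrightarrow> (a, b) \<in> omega1 \<or> (b, a) \<in> omega1"
  using Well_order_omega1 omega1_refl
  unfolding well_order_on_def linear_order_on_def total_on_def by metis

context
  includes cardinal_syntax
begin

lemma uncountable_Field_omega1: "uncountable (Field omega1)"
proof
  assume "countable (Field omega1)"
  then have "|Field omega1| \<le>o natLeq"
    by (simp add: countable_card_le_natLeq)
  moreover have "|Field omega1| =o omega1"
    by (rule card_of_Field_ordIso[OF cardSuc_Card_order[OF natLeq_Card_order]])
  moreover have "natLeq <o omega1"
    by (rule cardSuc_greater[OF natLeq_Card_order])
  ultimately show False
    by (meson not_ordLess_ordLeq ordIso_iff_ordLeq ordLeq_transitive)
qed

lemma countable_bounded_omega1: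
  assumes "countable B" "B \<subseteq> Field omega1"
  obtains \<beta> where "\<beta> \<in> Field omega1" "\<And>\<alpha>. \<alpha> \<in> B \<Longrightarrow> (\<alpha>, \<beta>) \<in> omega1"
proof -
  have "\<exists>i \<in> Field omega1. B \<subseteq> under omega1 i"
  proof (rule cardSuc_UNION[OF natLeq_Card_order])
    show "\<not> finite (Field natLeq)"
      by (simp add: Field_natLeq)
    show "relChain omega1 (under omega1)"
      unfolding relChain_def under_def using omega1_trans by blast
    show "B \<subseteq> (\<Union>i\<in>Field omega1. under omega1 i)"
      using assms(2) omega1_refl unfolding under_def by blast
    show "|B| \<le>o natLeq"
      using assms(1) by (simp add: countable_card_le_natLeq)
  qed
  then show thesis
    using that unfolding under_def by blast
qed

end

definition L_tail :: "nat set \<Rightarrow> nat set option set" where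
  "L_tail \<alpha> = insert None (Some ` {\<gamma> \<in> Field omega1. (\<alpha>, \<gamma>) \<in> omega1 \<and> \<gamma> \<noteq> \<alpha>})"

definition L_carrier :: "nat set option set" where
  "L_carrier = insert None (Some ` Field omega1)"

definition L_open :: "nat set option set \<Rightarrow> bool" where
  "L_open U \<longleftrightarrow> U \<subseteq> L_carrier \<and> (None \<in> U \<longrightarrow> (\<exists>\<alpha>\<in>Field omega1. L_tail \<alpha> \<subseteq> U))"

lemma L_omega1_eq_topology_L_open: "L_omega1 = topology L_open"
  unfolding L_omega1_def L_open_def L_tail_def L_carrier_def by (rule refl)

lemma L_tail_antimono:
  assumes "(\<alpha>, \<beta>) \<in> omega1"
  shows "L_tail \<beta> \<subseteq> L_tail \<alpha>"
proof
  fix x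
  assume "x \<in> L_tail \<beta>"
  then consider "x = None"
    | \<gamma> where "x = Some \<gamma>" "\<gamma> \<in> Field omega1" "(\<beta>, \<gamma>) \<in> omega1" "\<gamma> \<noteq> \<beta>"
    unfolding L_tail_def by blast
  then show "x \<in> L_tail \<alpha>"
  proof cases
    case (2 \<gamma>)
    then have "(\<alpha>, \<gamma>) \<in> omega1" "\<gamma> \<noteq> \<alpha>"
      using omega1_trans[OF assms] omega1_antisym[OF assms] by auto
    with 2 show ?thesis
      unfolding L_tail_def by simp
  qed (simp add: L_tail_def)
qed

lemma L_tail_subset_L_carrier: "L_tail \<alpha> \<subseteq> L_carrier"
  unfolding L_tail_def L_carrier_def by auto

lemma istopology_L_open: "istopology L_open"
  unfolding istopology_def
proof (intro conjI allI impI)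
  fix S T
  assume S: "L_open S" and T: "L_open T"
  show "L_open (S \<inter> T)"
  proof (cases "None \<in> S \<inter> T")
    case True
    then obtain a b where a: "a \<in> Field omega1" "L_tail a \<subseteq> S"
      and b: "b \<in> Field omega1" "L_tail b \<subseteq> T"
      using S T unfolding L_open_def by blast
    have "\<exists>c\<in>Field omega1. L_tail c \<subseteq> S \<inter> T"
    proof (cases "(a, b) \<in> omega1")
      case True
      then show ?thesis
        using L_tail_antimono[OF True] a b by blast
    next
      case False
      then have "(b, a) \<in> omega1"
        using omega1_total[OF a(1) b(1)] by blast
      then show ?thesis
        using L_tail_antimono[of b a] a b by blast
    qed
    then show ?thesis
      using S T unfolding L_open_def by blast
  next
    case False
    then show ?thesis
      using S T unfolding L_open_def by blast
  qed
next
  fix \<K>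
  assume \<K>: "\<forall>K\<in>\<K>. L_open K"
  show "L_open (\<Union>\<K>)"
    unfolding L_open_def
  proof (intro conjI impI)
    show "\<Union>\<K> \<subseteq> L_carrier"
      using \<K> unfolding L_open_def by blast
    assume "None \<in> \<Union>\<K>"
    then obtain K where "K \<in> \<K>" "None \<in> K"
      by blast
    then obtain a where "a \<in> Field omega1" "L_tail a \<subseteq> K"
      using \<K> unfolding L_open_def by blast
    with \<open>K \<in> \<K>\<close> show "\<exists>\<alpha>\<in>Field omega1. L_tail \<alpha> \<subseteq> \<Union>\<K>"
      by blast
  qed
qed

lemma openin_L_omega1: "openin L_omega1 U \<longleftrightarrow> L_open U"
  by (simp add: L_omega1_eq_topology_L_open istopology_L_open)

lemma topspace_L_omega1: "topspace L_omega1 = L_carrier"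
proof -
  obtain a where "a \<in> Field omega1"
    using uncountable_Field_omega1 by (metis countable_empty ex_in_conv)
  then have "L_open L_carrier"
    unfolding L_open_def using L_tail_subset_L_carrier by blast
  then have "L_carrier \<subseteq> topspace L_omega1"
    by (simp add: openin_L_omega1[symmetric] openin_subset)
  moreover have "topspace L_omega1 \<subseteq> L_carrier"
    using openin_L_omega1[of "topspace L_omega1"] by (simp add: L_open_def)
  ultimately show ?thesis
    by (rule subset_antisym[rotated])
qed

lemma p_space_L_omega1: "p_space L_omega1"
  unfolding p_space_def openin_L_omega1
proof (intro allI impI)
  fix U :: "nat \<Rightarrow> nat set option set"
  assume "\<forall>n. L_open (U n)"
  then have U: "\<And>n. U n \<subseteq> L_carrier" "\<And>n. None \<in> U n \<Longrightarrow> \<exists>a\<in>Field omega1. L_tail a \<subseteq> U n"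
    by (simp_all add: L_open_def)
  show "L_open (\<Inter>n. U n)"
    unfolding L_open_def
  proof (intro conjI impI)
    show "(\<Inter>n. U n) \<subseteq> L_carrier"
      using U(1)[of 0] by blast
    assume "None \<in> (\<Inter>n. U n)"
    then have "\<exists>a\<in>Field omega1. L_tail a \<subseteq> U n" for n
      using U(2) by blast
    then obtain a where a: "\<And>n. a n \<in> Field omega1" "\<And>n. L_tail (a n) \<subseteq> U n"
      by metis
    obtain b where b: "b \<in> Field omega1" "\<And>\<alpha>. \<alpha> \<in> range a \<Longrightarrow> (\<alpha>, b) \<in> omega1"
      by (rule countable_bounded_omega1[of "range a"]) (use a(1) in auto)
    have "L_tail b \<subseteq> U n" for n
      using L_tail_antimono[OF b(2)[OF rangeI]] a(2) by (rule subset_trans)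
    then show "\<exists>\<beta>\<in>Field omega1. L_tail \<beta> \<subseteq> (\<Inter>n. U n)"
      using b(1) by blast
  qed
qed

lemma compactin_L_omega1_imp_finite:
  assumes cpt: "compactin L_omega1 C"
  shows "finite C"
proof (rule ccontr)
  assume "infinite C"
  have "C \<subseteq> insert None (Some ` {a \<in> Field omega1. Some a \<in> C})"
    using compactin_subset_topspace[OF cpt] by (auto simp: topspace_L_omega1 L_carrier_def)
  with \<open>infinite C\<close> have "infinite {a \<in> Field omega1. Some a \<in> C}"
    using finite_subset by fastforce
  then obtain D where D: "D \<subseteq> {a \<in> Field omega1. Some a \<in> C}" "countable D" "infinite D"
    using infinite_countable_subset' by meson
  obtain b where b: "b \<in> Field omega1" "\<And>a. a \<in> D \<Longrightarrow> (a, b) \<in> omega1"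
    by (rule countable_bounded_omega1[OF D(2)]) (use D(1) in auto)
  define \<U> where "\<U> = insert (L_tail b) ((\<lambda>\<gamma>. {Some \<gamma>}) ` Field omega1)"
  have "openin L_omega1 U" if "U \<in> \<U>" for U
    using that b(1) L_tail_subset_L_carrier
    by (auto simp: \<U>_def openin_L_omega1 L_open_def L_carrier_def)
  moreover have "C \<subseteq> \<Union>\<U>"
    using compactin_subset_topspace[OF cpt]
    by (auto simp: \<U>_def topspace_L_omega1 L_carrier_def L_tail_def)
  ultimately obtain \<F> where \<F>: "finite \<F>" "\<F> \<subseteq> \<U>" "C \<subseteq> \<Union>\<F>"
    using cpt unfolding compactin_def by meson
  have "Some a \<notin> L_tail b" if "a \<in> D" for a
    using b(2)[OF that] omega1_antisym by (auto simp: L_tail_def)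
  then have "Some ` D \<subseteq> \<Union>(\<F> - {L_tail b})"
    using \<F>(3) D(1) by blast
  moreover have "finite (\<Union>(\<F> - {L_tail b}))"
    using \<F>(1,2) by (auto simp: \<U>_def)
  ultimately have "finite (Some ` D)"
    by (rule finite_subset)
  with D(3) show False
    by (simp add: finite_image_iff)
qed

theorem mainTheorem7:
  shows "p_space L_omega1 \<and> \<not> frolik_space_over TYPE('b) L_omega1"
proof
  show "p_space L_omega1"
    by (rule p_space_L_omega1)
  have "uncountable (topspace L_omega1)"
    using uncountable_Field_omega1 countable_image_inj_eq[of Some]
    by (auto simp: topspace_L_omega1 L_carrier_def)
  then show "\<not> frolik_space_over TYPE('b) L_omega1"
    using frolik_space_countable_if_compactin_finite compactin_L_omega1_imp_finite by blast
qed

end
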